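(* Let $S$ be the set obtained after $i-1$ iterations of BLITS (calling the SIEVE subroutine), and let $O \in \arg\max_{|S'|\le k} f(S')$. Then $\mathbb{E}[f(O\cup S)] \ge (1-1/r)^{i-1}\,\texttt{OPT}$.
   Context: $N$ is a ground set with $|N|=n$, $f:2^N\to\mathbb{R}_{\ge0}$ is non-negative submodular (not necessarily monotone), $k$ is a cardinality constraint, $\texttt{OPT}=\max_{|S|\le k} f(S)$. $f_S(T) = f(S\cup T)-f(S)$, $f_S(a) = f_S(\{a\})$. A dummy element $a$ satisfies $f_S(a)=0$ for all $S$. $\mathcal{U}(X)$ is the uniform distribution over subsets of $X$ of size exactly $k/r$, and $\Delta(a,S,X) := \mathbb{E}_{R\sim\mathcal{U}(X)}[f_{S\cup(R\setminus\{a\})}(a)]$. SIEVE$(S,k,i,r)$ (idealized, with parameter $\epsilon>0$, exact $\texttt{OPT}$ and exact expectations): $X\leftarrow N$, $t \leftarrow \frac{1-\epsilon/2}{2}((1-1/r)^{i-1}(1-\epsilon/2)\texttt{OPT} - f(S))$; while $|X|>k$: $X^+\leftarrow\{a\in X:\Delta(a,S,X)\ge0\}$; if $\mathbb{E}_{R\sim\mathcal{U}(X)}[f_S(R\cap X^+)]\ge t/r$ return $R\cap X^+$ with $R\sim\mathcal{U}(X)$; else $X\leftarrow\{a\in X:\Delta(a,S,X)\ge(1+\epsilon/4)t/k\}$. After the loop: add $k-|X|$ dummy elements to $X$, set $X^+\leftarrow\{a\in X:\Delta(a,S,X)\ge0\}$, return $R\cap X^+$ with $R\sim\mathcal{U}(X)$.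 BLITS with parameter $r$: $S\leftarrow\emptyset$; for $i=1,\dots,r$, $S\leftarrow S\cup$ SIEVE$(S,k,i,r)$; return $S$. *)

theory Defs
  imports "HOL-Probability.SPMF" "HOL-Library.While_Combinator"
begin

text \<open>Elements handled by the algorithm: real elements Inl a (a in N) and dummy
  elements Inr j. The function is extended to such sets by ignoring dummies,
  so that every dummy element d satisfies F(S + d) - F S = 0 for all S.\<close>

definition ext_f :: "('a set \<Rightarrow> real) \<Rightarrow> ('a + nat) set \<Rightarrow> real" where
  "ext_f f T = f (Inl -` T)"

definition submodular_on :: "'a set \<Rightarrow> ('a set \<Rightarrow> real) \<Rightarrow> bool" where
  "submodular_on N f \<longleftrightarrow> (\<forall>A B. A \<subseteq> N \<longrightarrow> B \<subseteq> N \<longrightarrow> f (A \<union> B) + f (A \<inter> B) \<le> f A + f B)"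

definition nonneg_on :: "'a set \<Rightarrow> ('a set \<Rightarrow> real) \<Rightarrow> bool" where
  "nonneg_on N f \<longleftrightarrow> (\<forall>A. A \<subseteq> N \<longrightarrow> 0 \<le> f A)"

definition OPT :: "'a set \<Rightarrow> ('a set \<Rightarrow> real) \<Rightarrow> nat \<Rightarrow> real" where
  "OPT N f k = Max (f ` {S. S \<subseteq> N \<and> card S \<le> k})"

definition Unif :: "nat \<Rightarrow> nat \<Rightarrow> 'b set \<Rightarrow> 'b set pmf" where
  "Unif k r X = pmf_of_set {R. R \<subseteq> X \<and> card R = k div r}"

definition Delta :: "('a set \<Rightarrow> real) \<Rightarrow> nat \<Rightarrow> nat \<Rightarrow> ('a + nat)
    \<Rightarrow> ('a + nat) set \<Rightarrow> ('a + nat) set \<Rightarrow> real" where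
  "Delta f k r a S X = measure_pmf.expectation (Unif k r X)
     (\<lambda>R. ext_f f (S \<union> (R - {a}) \<union> {a}) - ext_f f (S \<union> (R - {a})))"

definition Xplus :: "('a set \<Rightarrow> real) \<Rightarrow> nat \<Rightarrow> nat \<Rightarrow> ('a + nat) set
    \<Rightarrow> ('a + nat) set \<Rightarrow> ('a + nat) set" where
  "Xplus f k r S X = {a \<in> X. Delta f k r a S X \<ge> 0}"

definition sieve_t :: "'a set \<Rightarrow> ('a set \<Rightarrow> real) \<Rightarrow> nat \<Rightarrow> nat \<Rightarrow> real \<Rightarrow> nat
    \<Rightarrow> ('a + nat) set \<Rightarrow> real" where
  "sieve_t N f k r eps i S = (1 - eps / 2) / 2 *
     ((1 - 1 / real r) ^ (i - 1) * (1 - eps / 2) * OPT N f k - ext_f f S)"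

definition sieve_cond :: "'a set \<Rightarrow> ('a set \<Rightarrow> real) \<Rightarrow> nat \<Rightarrow> nat \<Rightarrow> real \<Rightarrow> nat
    \<Rightarrow> ('a + nat) set \<Rightarrow> ('a + nat) set \<Rightarrow> bool" where
  "sieve_cond N f k r eps i S X \<longleftrightarrow>
     measure_pmf.expectation (Unif k r X)
       (\<lambda>R. ext_f f (S \<union> (R \<inter> Xplus f k r S X)) - ext_f f S)
     \<ge> sieve_t N f k r eps i S / real r"

definition sieve_filter :: "'a set \<Rightarrow> ('a set \<Rightarrow> real) \<Rightarrow> nat \<Rightarrow> nat \<Rightarrow> real \<Rightarrow> nat
    \<Rightarrow> ('a + nat) set \<Rightarrow> ('a + nat) set \<Rightarrow> ('a + nat) set" where
  "sieve_filter N f k r eps i S X =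
     {a \<in> X. Delta f k r a S X \<ge> (1 + eps / 4) * sieve_t N f k r eps i S / real k}"

text \<open>The deterministic while loop of SIEVE on X (None = the loop does not terminate).
  It exits either with |X| \<le> k or with the if-test true (and |X| > k).\<close>
definition sieve_loop :: "'a set \<Rightarrow> ('a set \<Rightarrow> real) \<Rightarrow> nat \<Rightarrow> nat \<Rightarrow> real \<Rightarrow> nat
    \<Rightarrow> ('a + nat) set \<Rightarrow> ('a + nat) set option" where
  "sieve_loop N f k r eps i S =
     while_option (\<lambda>X. card X > k \<and> \<not> sieve_cond N f k r eps i S X)
                  (sieve_filter N f k r eps i S) (Inl ` N)"

definition sieve_return :: "('a set \<Rightarrow> real) \<Rightarrow> nat \<Rightarrow> nat
    \<Rightarrow> ('a + nat) set \<Rightarrow> ('a + nat) set \<Rightarrow> ('a + nat) set spmf" where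
  "sieve_return f k r S X = spmf_of_pmf (map_pmf (\<lambda>R. R \<inter> Xplus f k r S X) (Unif k r X))"

definition SIEVE :: "'a set \<Rightarrow> ('a set \<Rightarrow> real) \<Rightarrow> nat \<Rightarrow> nat \<Rightarrow> real \<Rightarrow> nat
    \<Rightarrow> ('a + nat) set \<Rightarrow> ('a + nat) set spmf" where
  "SIEVE N f k r eps i S =
     (case sieve_loop N f k r eps i S of
        None \<Rightarrow> return_pmf None
      | Some X \<Rightarrow>
          if card X > k then sieve_return f k r S X
          else sieve_return f k r S (X \<union> Inr ` {0..<k - card X}))"

text \<open>The set S after m iterations of BLITS (the (m+1)-th iteration calls SIEVE(S,k,m+1,r)).\<close>
fun BLITS_iter :: "'a set \<Rightarrow> ('a set \<Rightarrow> real) \<Rightarrow> nat \<Rightarrow> nat \<Rightarrow> real \<Rightarrow> nat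
    \<Rightarrow> ('a + nat) set spmf" where
  "BLITS_iter N f k r eps 0 = return_spmf {}"
| "BLITS_iter N f k r eps (Suc m) =
     bind_spmf (BLITS_iter N f k r eps m)
       (\<lambda>S. map_spmf (\<lambda>T. S \<union> T) (SIEVE N f k r eps (Suc m) S))"

end

theory Submission
  imports Defs
begin

text \<open>Each call of SIEVE returns \<open>R \<inter> X\<^sup>+\<close> for a uniformly random \<open>(k div r)\<close>-subset \<open>R\<close> of a
  set \<open>X\<close> with at least \<open>k\<close> elements. For fixed \<open>S\<close>, the map \<open>R \<mapsto> f(O \<union> S \<union> (R \<inter> X\<^sup>+))\<close> is
  non-negative and submodular on \<open>X\<close>, and for such an \<open>h\<close> a uniformly random \<open>s\<close>-subset of an
  \<open>m\<close>-set satisfies \<open>E h(R) \<ge> (1 - s/m) h(\<emptyset>)\<close>: adding a random new element to a random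
  \<open>s\<close>-subset keeps at least a fraction \<open>(m - s - 1)/(m - s)\<close> of the value, by submodularity and
  \<open>h(X) \<ge> 0\<close>. As \<open>s/m \<le> 1/r\<close>, every iteration of BLITS multiplies \<open>E f(O \<union> S)\<close> by at least
  \<open>1 - 1/r\<close>.\<close>

lemma submodular_on_sum_marginals_ge:
  fixes h :: "'a set \<Rightarrow> real"
  assumes sub: "submodular_on X h" and "finite B" and R: "R \<subseteq> X" and "B \<subseteq> X - R"
  shows "h (R \<union> B) - h R \<le> (\<Sum>a\<in>B. h (insert a R) - h R)"
  using \<open>finite B\<close> \<open>B \<subseteq> X - R\<close>
proof (induction B rule: finite_induct)
  case empty
  show ?case by simp
next
  case (insert b B)
  have "insert b R \<union> (R \<union> B) = R \<union> insert b B" "insert b R \<inter> (R \<union> B) = R"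
    using insert by auto
  moreover have "insert b R \<subseteq> X" "R \<union> B \<subseteq> X" using insert.prems R by auto
  ultimately have "h (R \<union> insert b B) + h R \<le> h (insert b R) + h (R \<union> B)"
    using sub unfolding submodular_on_def by metis
  with insert show ?case by simp
qed

lemma sum_insert_subsets_card:
  fixes g :: "'a set \<Rightarrow> 'b::comm_semiring_1"
  assumes X: "finite X"
  shows "(\<Sum>R\<in>{R. R \<subseteq> X \<and> card R = s}. \<Sum>a\<in>X - R. g (insert a R))
       = of_nat (Suc s) * (\<Sum>R\<in>{R. R \<subseteq> X \<and> card R = Suc s}. g R)"
proof -
  let ?P = "\<lambda>s. {R. R \<subseteq> X \<and> card R = s}"
  have fin: "finite (?P s')" for s' using X by (simp add: finite_Collect_subsets)
  have "(\<Sum>R\<in>?P s. \<Sum>a\<in>X - R. g (insert a R)) = (\<Sum>(R, a)\<in>Sigma (?P s) (\<lambda>R. X - R). g (insert a R))"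
    using fin X by (subst sum.Sigma) auto
  also have "\<dots> = (\<Sum>(R, a)\<in>Sigma (?P (Suc s)) (\<lambda>R. R). g R)"
    by (rule sum.reindex_bij_witness[where j = "\<lambda>(R, a). (insert a R, a)" and i = "\<lambda>(R, a). (R - {a}, a)"])
       (auto simp: X finite_subset card_insert_if)
  also have "\<dots> = (\<Sum>R\<in>?P (Suc s). of_nat (Suc s) * g R)"
    using fin X by (subst sum.Sigma[symmetric]) (auto intro: finite_subset)
  finally show ?thesis by (simp add: sum_distrib_left)
qed

lemma sum_subsets_card_Suc_ge:
  fixes h :: "'a set \<Rightarrow> real"
  assumes X: "finite X" and nn: "nonneg_on X h" and sub: "submodular_on X h"
  shows "(real (card X) - s - 1) * (\<Sum>R\<in>{R. R \<subseteq> X \<and> card R = s}. h R)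
       \<le> Suc s * (\<Sum>R\<in>{R. R \<subseteq> X \<and> card R = Suc s}. h R)"
proof -
  have marginals: "(real (card X) - s - 1) * h R \<le> (\<Sum>a\<in>X - R. h (insert a R))"
    if R: "R \<subseteq> X" "card R = s" for R
  proof -
    have "h (R \<union> (X - R)) - h R \<le> (\<Sum>a\<in>X - R. h (insert a R) - h R)"
      using X R by (intro submodular_on_sum_marginals_ge[OF sub]) auto
    moreover have "R \<union> (X - R) = X" using R by auto
    moreover have "0 \<le> h X" using nn by (simp add: nonneg_on_def)
    moreover have "card (X - R) = card X - s" "s \<le> card X"
      using X R by (auto simp: card_Diff_subset finite_subset card_mono)
    ultimately show ?thesis by (simp add: sum_subtractf of_nat_diff algebra_simps)
  qed
  have "(real (card X) - s - 1) * (\<Sum>R\<in>{R. R \<subseteq> X \<and> card R = s}. h R)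
      = (\<Sum>R\<in>{R. R \<subseteq> X \<and> card R = s}. (real (card X) - s - 1) * h R)"
    by (simp add: sum_distrib_left)
  also have "\<dots> \<le> (\<Sum>R\<in>{R. R \<subseteq> X \<and> card R = s}. \<Sum>a\<in>X - R. h (insert a R))"
    by (intro sum_mono marginals) auto
  also have "\<dots> = Suc s * (\<Sum>R\<in>{R. R \<subseteq> X \<and> card R = Suc s}. h R)"
    by (rule sum_insert_subsets_card[OF X])
  finally show ?thesis .
qed

lemma sum_subsets_card_ge:
  fixes h :: "'a set \<Rightarrow> real"
  assumes X: "finite X" and nn: "nonneg_on X h" and sub: "submodular_on X h"
  shows "s \<le> card X \<Longrightarrow> (real (card X) - s) * (card X choose s) * h {}
           \<le> card X * (\<Sum>R\<in>{R. R \<subseteq> X \<and> card R = s}. h R)"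
proof (induction s)
  case 0
  have "{R. R \<subseteq> X \<and> card R = 0} = {{}}" using X finite_subset by fastforce
  then show ?case by simp
next
  case (Suc s)
  let ?m = "real (card X)" and ?S = "\<lambda>s. \<Sum>R\<in>{R. R \<subseteq> X \<and> card R = s}. h R"
  have "Suc s * (card X choose Suc s) = (card X - s) * (card X choose s)"
    by (metis binomial_absorption binomial_absorb_comp)
  then have binomial: "real (Suc s) * (card X choose Suc s) = (?m - s) * (card X choose s)"
    using Suc.prems by (metis of_nat_diff of_nat_mult Suc_leD)
  have "Suc s * ((?m - Suc s) * (card X choose Suc s) * h {})
      = (?m - s - 1) * h {} * (real (Suc s) * (card X choose Suc s))"
    by (simp add: algebra_simps)
  also have "\<dots> = (?m - s - 1) * ((?m - s) * (card X choose s) * h {})"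
    unfolding binomial by (simp add: ac_simps)
  also have "\<dots> \<le> (?m - s - 1) * (?m * ?S s)"
    using Suc by (intro mult_left_mono) auto
  also have "\<dots> = ?m * ((?m - s - 1) * ?S s)" by simp
  also have "\<dots> \<le> ?m * (Suc s * ?S (Suc s))"
    by (intro mult_left_mono sum_subsets_card_Suc_ge[OF X nn sub]) simp
  finally have "Suc s * ((?m - Suc s) * (card X choose Suc s) * h {}) \<le> Suc s * (?m * ?S (Suc s))"
    by (simp only: mult.left_commute)
  then show ?case by (rule mult_left_le_imp_le) simp
qed

lemma expectation_pmf_of_set_subsets_card_ge:
  fixes h :: "'a set \<Rightarrow> real"
  assumes X: "finite X" and nn: "nonneg_on X h" and sub: "submodular_on X h" and s: "s \<le> card X"
  shows "(1 - s / card X) * h {}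
           \<le> measure_pmf.expectation (pmf_of_set {R. R \<subseteq> X \<and> card R = s}) h"
proof (cases "card X = 0")
  case True
  with X s have "{R. R \<subseteq> X \<and> card R = s} = {{}}" by auto
  with True show ?thesis by (simp add: pmf_of_set_singleton)
next
  case False
  let ?P = "{R. R \<subseteq> X \<and> card R = s}"
  have P: "finite ?P" "card ?P = card X choose s" "card X choose s > 0"
    using X s by (simp_all add: finite_Collect_subsets n_subsets)
  then have "?P \<noteq> {}" by (metis card.empty less_irrefl)
  have "(1 - s / card X) * h {} = (real (card X) - s) * (card X choose s) * h {} / (card X * (card X choose s))"
    using False P(3) by (simp add: field_simps)
  also have "\<dots> \<le> card X * sum h ?P / (card X * (card X choose s))"
    by (intro divide_right_mono sum_subsets_card_ge[OF X nn sub s]) simp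
  also have "\<dots> = measure_pmf.expectation (pmf_of_set ?P) h"
    using False P \<open>?P \<noteq> {}\<close> by (simp add: integral_pmf_of_set)
  finally show ?thesis .
qed

lemma nonneg_on_union_vimage_Int:
  assumes "nonneg_on N f" and "C \<subseteq> N" and "g -` X \<subseteq> N"
  shows "nonneg_on X (\<lambda>R. f (C \<union> g -` (R \<inter> P)))"
proof -
  have "C \<union> g -` (R \<inter> P) \<subseteq> N" if "R \<subseteq> X" for R using assms(2,3) that by blast
  with assms(1) show ?thesis by (simp add: nonneg_on_def)
qed

lemma submodular_on_union_vimage_Int:
  assumes sub: "submodular_on N f" and "C \<subseteq> N" and "g -` X \<subseteq> N"
  shows "submodular_on X (\<lambda>R. f (C \<union> g -` (R \<inter> P)))"
  unfolding submodular_on_def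
proof (intro allI impI)
  fix A B assume "A \<subseteq> X" "B \<subseteq> X"
  let ?a = "C \<union> g -` (A \<inter> P)" and ?b = "C \<union> g -` (B \<inter> P)"
  have "?a \<subseteq> N" "?b \<subseteq> N" using assms(2,3) \<open>A \<subseteq> X\<close> \<open>B \<subseteq> X\<close> by blast+
  then have "f (?a \<union> ?b) + f (?a \<inter> ?b) \<le> f ?a + f ?b"
    using sub unfolding submodular_on_def by blast
  moreover have "?a \<union> ?b = C \<union> g -` ((A \<union> B) \<inter> P)" "?a \<inter> ?b = C \<union> g -` ((A \<inter> B) \<inter> P)"
    by auto
  ultimately show "f (C \<union> g -` ((A \<union> B) \<inter> P)) + f (C \<union> g -` ((A \<inter> B) \<inter> P)) \<le> f ?a + f ?b"
    by simp
qed

lemma nn_integral_measure_spmf_bind: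
  "(\<integral>\<^sup>+x. F x \<partial>measure_spmf (bind_spmf p g)) = (\<integral>\<^sup>+y. (\<integral>\<^sup>+x. F x \<partial>measure_spmf (g y)) \<partial>measure_spmf p)"
  unfolding measure_spmf_bind
  by (subst nn_integral_bind[where B = "count_space UNIV"]) (auto simp: space_subprob_algebra)

lemma sieve_loop_subset:
  assumes "sieve_loop N f k r eps i S = Some X"
  shows "X \<subseteq> Inl ` N"
  using while_option_rule[where P = "\<lambda>X. X \<subseteq> Inl ` N", OF _ assms[unfolded sieve_loop_def]]
  by (auto simp: sieve_filter_def)

lemma SIEVE_cases:
  assumes "finite N"
  obtains "SIEVE N f k r eps i S = return_pmf None"
    | X where "SIEVE N f k r eps i S = sieve_return f k r S X" "finite X" "k \<le> card X" "Inl -` X \<subseteq> N"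
proof (cases "sieve_loop N f k r eps i S")
  case None
  then show ?thesis by (intro that(1)) (simp add: SIEVE_def)
next
  case (Some X)
  have XN: "X \<subseteq> Inl ` N" by (rule sieve_loop_subset[OF Some])
  with assms have X: "finite X" by (meson finite_imageI finite_subset)
  show ?thesis
  proof (cases "k < card X")
    case True
    with Some X XN show ?thesis by (intro that(2)[of X]) (auto simp: SIEVE_def)
  next
    case False
    let ?D = "Inr ` {0..<k - card X} :: ('a + nat) set"
    have "card (X \<union> ?D) = card X + (k - card X)"
      using X XN by (subst card_Un_disjoint) (auto simp: card_image)
    with Some X XN False show ?thesis by (intro that(2)[of "X \<union> ?D"]) (auto simp: SIEVE_def)
  qed
qed

lemma set_spmf_SIEVE_vimage_Inl:
  assumes "finite N" and "T \<in> set_spmf (SIEVE N f k r eps i S)"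
  shows "Inl -` T \<subseteq> N"
proof (cases rule: SIEVE_cases[OF assms(1), of f k r eps i S])
  case 1
  with assms(2) show ?thesis by simp
next
  case (2 X)
  have "Xplus f k r S X \<subseteq> X" by (auto simp: Xplus_def)
  with 2 assms(2) show ?thesis by (auto simp: sieve_return_def)
qed

lemma set_spmf_BLITS_iter_vimage_Inl:
  assumes "finite N"
  shows "S \<in> set_spmf (BLITS_iter N f k r eps m) \<Longrightarrow> Inl -` S \<subseteq> N"
proof (induction m arbitrary: S)
  case 0
  then show ?case by simp
next
  case (Suc m)
  then obtain S0 T where "S0 \<in> set_spmf (BLITS_iter N f k r eps m)"
    "T \<in> set_spmf (SIEVE N f k r eps (Suc m) S0)" "S = S0 \<union> T"
    by (auto simp: set_bind_spmf)
  with Suc.IH set_spmf_SIEVE_vimage_Inl[OF assms] show ?case by blast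
qed

lemma set_pmf_Unif:
  assumes "finite X" and "k div r \<le> card X"
  shows "set_pmf (Unif k r X) = {R. R \<subseteq> X \<and> card R = k div r}"
proof -
  obtain R where "R \<subseteq> X" "card R = k div r" using assms(2) by (metis obtain_subset_with_card_n)
  then have "{R. R \<subseteq> X \<and> card R = k div r} \<noteq> {}" by blast
  with assms(1) show ?thesis by (simp add: Unif_def finite_Collect_subsets set_pmf_of_set)
qed

lemma nn_integral_sieve_return_ge:
  fixes f :: "'a set \<Rightarrow> real"
  assumes nn: "nonneg_on N f" and sub: "submodular_on N f" and r: "r \<ge> 1" and C: "C \<subseteq> N"
    and X: "finite X" "k \<le> card X" "Inl -` X \<subseteq> N"
  shows "ennreal ((1 - 1 / r) * f C)
           \<le> (\<integral>\<^sup>+T. ennreal (f (C \<union> Inl -` T)) \<partial>measure_spmf (sieve_return f k r S X))"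
proof -
  define h where "h R = f (C \<union> Inl -` (R \<inter> Xplus f k r S X))" for R
  have h: "nonneg_on X h" "submodular_on X h"
    unfolding h_def using nonneg_on_union_vimage_Int[OF nn C X(3)]
      submodular_on_union_vimage_Int[OF sub C X(3)] by auto
  have s: "k div r \<le> card X" using X(2) div_le_dividend le_trans by blast
  have "real (k div r) * r \<le> card X"
    using X(2) div_times_less_eq_dividend[of k r] by (metis le_trans of_nat_le_iff of_nat_mult)
  then have "real (k div r) / card X \<le> 1 / r"
    using r by (cases "card X = 0") (simp_all add: field_simps)
  moreover have "h {} = f C" "0 \<le> f C" using nn C by (simp_all add: h_def nonneg_on_def)
  ultimately have "(1 - 1 / r) * f C \<le> (1 - real (k div r) / card X) * h {}"
    by (simp add: mult_right_mono)
  also have "\<dots> \<le> measure_pmf.expectation (Unif k r X) h"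
    unfolding Unif_def by (rule expectation_pmf_of_set_subsets_card_ge[OF X(1) h s])
  finally have "ennreal ((1 - 1 / r) * f C) \<le> ennreal (measure_pmf.expectation (Unif k r X) h)"
    by (rule ennreal_leI)
  also have "\<dots> = (\<integral>\<^sup>+R. ennreal (h R) \<partial>measure_pmf (Unif k r X))"
  proof (rule nn_integral_eq_integral[symmetric])
    show "integrable (measure_pmf (Unif k r X)) h"
      using X(1) s by (intro integrable_measure_pmf_finite) (simp add: set_pmf_Unif finite_Collect_subsets)
    show "AE R in measure_pmf (Unif k r X). 0 \<le> h R"
      using h(1) X(1) s by (intro AE_pmfI) (auto simp: set_pmf_Unif nonneg_on_def)
  qed
  also have "\<dots> = (\<integral>\<^sup>+T. ennreal (f (C \<union> Inl -` T)) \<partial>measure_spmf (sieve_return f k r S X))"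
    by (simp add: sieve_return_def h_def)
  finally show ?thesis .
qed

lemma nn_integral_SIEVE_ge:
  fixes f :: "'a set \<Rightarrow> real"
  assumes "finite N" and "nonneg_on N f" and "submodular_on N f" and "r \<ge> 1" and "C \<subseteq> N"
    and lossless: "lossless_spmf (SIEVE N f k r eps i S)"
  shows "ennreal ((1 - 1 / r) * f C)
           \<le> (\<integral>\<^sup>+T. ennreal (f (C \<union> Inl -` T)) \<partial>measure_spmf (SIEVE N f k r eps i S))"
proof (cases rule: SIEVE_cases[OF assms(1), of f k r eps i S])
  case 1
  with lossless show ?thesis by simp
next
  case (2 X)
  then show ?thesis using nn_integral_sieve_return_ge[OF assms(2-5)] by simp
qed

lemma nn_integral_BLITS_iter_ge:
  fixes f :: "'a set \<Rightarrow> real"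
  assumes N: "finite N" and nn: "nonneg_on N f" and sub: "submodular_on N f" and r: "r \<ge> 1"
    and Opt: "Opt \<subseteq> N"
  shows "lossless_spmf (BLITS_iter N f k r eps m) \<Longrightarrow>
    ennreal ((1 - 1 / r) ^ m * f Opt)
      \<le> (\<integral>\<^sup>+S. ennreal (f (Opt \<union> Inl -` S)) \<partial>measure_spmf (BLITS_iter N f k r eps m))"
proof (induction m)
  case 0
  then show ?case by (simp add: measure_spmf_return_spmf nn_integral_return)
next
  case (Suc m)
  let ?B = "BLITS_iter N f k r eps m" and ?c = "1 - 1 / real r"
  have c: "0 \<le> ?c" using r by simp
  have "ennreal (?c ^ Suc m * f Opt) = ennreal ?c * ennreal (?c ^ m * f Opt)"
    using c by (simp add: ennreal_mult' mult.assoc)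
  also have "\<dots> \<le> ennreal ?c * (\<integral>\<^sup>+S. ennreal (f (Opt \<union> Inl -` S)) \<partial>measure_spmf ?B)"
    using Suc by (intro mult_left_mono) auto
  also have "\<dots> = (\<integral>\<^sup>+S. ennreal (?c * f (Opt \<union> Inl -` S)) \<partial>measure_spmf ?B)"
    using c by (simp add: nn_integral_cmult ennreal_mult')
  also have "\<dots> \<le> (\<integral>\<^sup>+S. (\<integral>\<^sup>+T. ennreal (f (Opt \<union> Inl -` S \<union> Inl -` T))
                        \<partial>measure_spmf (SIEVE N f k r eps (Suc m) S)) \<partial>measure_spmf ?B)"
  proof (intro nn_integral_mono_AE, unfold AE_measure_spmf_iff, intro ballI)
    fix S assume S: "S \<in> set_spmf ?B"
    have "Opt \<union> Inl -` S \<subseteq> N" using set_spmf_BLITS_iter_vimage_Inl[OF N S] Opt by blast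
    moreover have "lossless_spmf (SIEVE N f k r eps (Suc m) S)" using Suc.prems S by simp
    ultimately show "ennreal (?c * f (Opt \<union> Inl -` S))
        \<le> (\<integral>\<^sup>+T. ennreal (f (Opt \<union> Inl -` S \<union> Inl -` T)) \<partial>measure_spmf (SIEVE N f k r eps (Suc m) S))"
      by (rule nn_integral_SIEVE_ge[OF N nn sub r])
  qed
  also have "\<dots> = (\<integral>\<^sup>+S. ennreal (f (Opt \<union> Inl -` S)) \<partial>measure_spmf (BLITS_iter N f k r eps (Suc m)))"
    by (simp add: nn_integral_measure_spmf_bind o_def Un_assoc)
  finally show ?case .
qed

theorem lemma4:
  fixes N :: "'a set" and f :: "'a set \<Rightarrow> real" and k r i :: nat and eps :: real
    and Opt :: "'a set"
  assumes "finite N"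
    and "nonneg_on N f" and "submodular_on N f"
    and "eps > 0" and "r \<ge> 1"
    and "1 \<le> i" and "i \<le> r + 1"
    and "Opt \<subseteq> N" and "card Opt \<le> k" and "f Opt = OPT N f k"
    and "lossless_spmf (BLITS_iter N f k r eps (i - 1))"
  shows "integral\<^sup>L (measure_spmf (BLITS_iter N f k r eps (i - 1)))
           (\<lambda>S. f (Opt \<union> Inl -` S))
         \<ge> (1 - 1 / real r) ^ (i - 1) * OPT N f k"
proof -
  let ?M = "measure_spmf (BLITS_iter N f k r eps (i - 1))" and ?g = "\<lambda>S. f (Opt \<union> Inl -` S)"
  have support: "AE S in ?M. Opt \<union> Inl -` S \<subseteq> N"
    using set_spmf_BLITS_iter_vimage_Inl[OF assms(1)] assms(8) by (simp add: AE_measure_spmf_iff)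
  then have nonneg: "AE S in ?M. 0 \<le> ?g S"
    by eventually_elim (use assms(2) in \<open>simp add: nonneg_on_def\<close>)
  have "integrable ?M ?g"
  proof (rule measure_spmf.integrable_const_bound)
    show "AE S in ?M. norm (?g S) \<le> Max (f ` Pow N)"
      using support nonneg by eventually_elim (use assms(1) in \<open>simp add: Max_ge\<close>)
  qed simp
  then have "(\<integral>\<^sup>+S. ennreal (?g S) \<partial>?M) = ennreal (integral\<^sup>L ?M ?g)"
    using nonneg by (rule nn_integral_eq_integral)
  with nn_integral_BLITS_iter_ge[OF assms(1-3,5,8,11)]
  have "ennreal ((1 - 1 / real r) ^ (i - 1) * f Opt) \<le> ennreal (integral\<^sup>L ?M ?g)" by simp
  then show ?thesis
    using integral_nonneg_AE[OF nonneg] assms(10) by (simp add: ennreal_le_iff)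
qed

end
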